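(* Let $n,p,q,c,d$ be nonnegative integers. Then \[ \begin{split} &\sum_{k=0}^n \binom{p+k}{p}\binom{q+n-k}{q}\binom{k}{c}\binom{n-k}{d}H_{p+k}H_{q+n-k}\\ &= \binom{n+p+q+1}{n-c-d}\binom{p+c}{c}\binom{q+d}{d} \Bigl[H_{p+q+c+d+1}^{(2)}-H_{n+p+q+1}^{(2)}\\ &\qquad +(H_{n+p+q+1}-H_{p+q+c+d+1}+H_{p+c})(H_{n+p+q+1}-H_{p+q+c+d+1}+H_{q+d})\Bigr]. \end{split} \]
   Context: For a nonnegative integer $N$ and $m\in\{1,2\}$, $H_N^{(m)}=\sum_{j=1}^N \frac{1}{j^m}$ (empty sum $=0$), and $H_N=H_N^{(1)}$. For integers $r$ and $j$, $\binom{r}{j}=\frac{r(r-1)\cdots(r-j+1)}{j!}$ if $j\ge 0$ and $\binom{r}{j}=0$ if $j<0$. *)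

theory Defs
  imports Complex_Main
begin

definition H1 :: "nat \<Rightarrow> real" where
  "H1 N = (\<Sum>j=1..N. 1 / real j)"

definition H2 :: "nat \<Rightarrow> real" where
  "H2 N = (\<Sum>j=1..N. 1 / (real j)^2)"

definition binomz :: "nat \<Rightarrow> int \<Rightarrow> real" where
  "binomz r j = (if j < 0 then 0 else real (r choose nat j))"

end

theory Submission
  imports Defs "HOL-Computational_Algebra.Formal_Power_Series"
begin

text \<open>
  Write U a = (1 - X)^-(a+1) and L = -ln (1 - X). The series with coefficients
  C(a+i, i) H1 (a+i) is U a * (H1 a + L). After the factors C(p+c, c) C(q+d, d) are pulled out,
  the sum becomes the coefficient of X^(n-c-d) in U (p+c) * U (q+d) * (H1 (p+c) + L) * (H1 (q+d) + L),
  and U (p+c) * U (q+d) = U s with s = p+q+c+d+1. It remains to know the coefficients of U s * L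
  and U s * L^2, namely C(s+m, m) (H1 (s+m) - H1 s) and
  C(s+m, m) ((H1 (s+m) - H1 s)^2 - (H2 (s+m) - H2 s)); both follow by induction on s, since
  multiplication by U 0 = 1/(1 - X) forms partial sums.
\<close>

unbundle fps_syntax

lemma H1_0 [simp]: "H1 0 = 0"
  unfolding H1_def by simp

lemma H1_Suc: "H1 (Suc n) = H1 n + 1 / real (Suc n)"
  unfolding H1_def by simp

lemma H2_0 [simp]: "H2 0 = 0"
  unfolding H2_def by simp

lemma H2_Suc: "H2 (Suc n) = H2 n + 1 / (real (Suc n))^2"
  unfolding H2_def by simp

lemma choose_Suc_Suc_ratios:
  fixes a m :: nat
  defines "B \<equiv> real (Suc (a + m) choose m)"
  shows "real (Suc (a + m) choose Suc m) = B * real (Suc a) / real (Suc m)"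
    and "real (Suc (Suc (a + m)) choose Suc m) = B * real (Suc (Suc (a + m))) / real (Suc m)"
proof -
  have "(Suc (a + m) choose Suc m) * Suc m = (Suc (a + m) choose m) * Suc a"
    by (metis Suc_times_binomial_add add.commute mult.commute)
  then have "real (Suc (a + m) choose Suc m) * real (Suc m) = B * real (Suc a)"
    unfolding B_def by (metis of_nat_mult)
  then show "real (Suc (a + m) choose Suc m) = B * real (Suc a) / real (Suc m)"
    by (simp add: field_simps del: of_nat_Suc)
  have "real (Suc (Suc (a + m)) choose Suc m) * real (Suc m) = B * real (Suc (Suc (a + m)))"
    using Suc_times_binomial_eq[of "Suc (a + m)" m] unfolding B_def by (metis of_nat_mult mult.commute)
  then show "real (Suc (Suc (a + m)) choose Suc m) = B * real (Suc (Suc (a + m))) / real (Suc m)"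
    by (simp add: field_simps del: of_nat_Suc)
qed

text \<open>Below, \<open>u\<close>, \<open>v\<close>, \<open>w\<close> stand for \<open>a + 1\<close>, \<open>m + 1\<close>, \<open>a + m + 2\<close>.\<close>

lemma harmonic_step_identity:
  fixes B x h u v w :: real
  assumes "u > 0" "v > 0" "w > 0" "w = u + v"
  shows "B * (x - (h + 1/u)) + B * u / v * (x - h) = B * w / v * (x + 1/w - (h + 1/u))"
  using assms(1-3) by (simp add: field_simps) (simp add: assms(4) algebra_simps)

lemma harmonic_sq_step_identity:
  fixes B x h y k u v w :: real
  assumes "u > 0" "v > 0" "w > 0" "w = u + v"
  shows "B * ((x - (h + 1/u))^2 - (y - (k + 1/u^2))) + B * u / v * ((x - h)^2 - (y - k))
       = B * w / v * ((x + 1/w - (h + 1/u))^2 - (y + 1/w^2 - (k + 1/u^2)))"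
  using assms(1-3) by (simp add: field_simps power2_eq_square) (simp add: assms(4) algebra_simps)

lemma harmonic_step:
  "real (Suc a + m choose m) * (H1 (Suc a + m) - H1 (Suc a))
     + real (a + Suc m choose Suc m) * (H1 (a + Suc m) - H1 a)
   = real (Suc a + Suc m choose Suc m) * (H1 (Suc a + Suc m) - H1 (Suc a))"
  unfolding add_Suc add_Suc_right
  using harmonic_step_identity[of "real (Suc a)" "real (Suc m)" "real (Suc (Suc (a + m)))"]
  unfolding choose_Suc_Suc_ratios H1_Suc[of "Suc (a + m)"] H1_Suc[of a]
  by (simp add: add_ac)

lemma harmonic_sq_step:
  "real (Suc a + m choose m) * ((H1 (Suc a + m) - H1 (Suc a))^2 - (H2 (Suc a + m) - H2 (Suc a)))
     + real (a + Suc m choose Suc m) * ((H1 (a + Suc m) - H1 a)^2 - (H2 (a + Suc m) - H2 a))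
   = real (Suc a + Suc m choose Suc m)
       * ((H1 (Suc a + Suc m) - H1 (Suc a))^2 - (H2 (Suc a + Suc m) - H2 (Suc a)))"
  unfolding add_Suc add_Suc_right
  using harmonic_sq_step_identity[of "real (Suc a)" "real (Suc m)" "real (Suc (Suc (a + m)))"]
  unfolding choose_Suc_Suc_ratios H1_Suc[of "Suc (a + m)"] H1_Suc[of a]
    H2_Suc[of "Suc (a + m)"] H2_Suc[of a]
  by (simp add: add_ac)

definition neg_binomial_fps :: "nat \<Rightarrow> real fps" where
  "neg_binomial_fps a = Abs_fps (\<lambda>i. real ((a + i) choose i))"

text \<open>The series \<open>-ln (1 - X)\<close>.\<close>
definition log_fps :: "real fps" where
  "log_fps = Abs_fps (\<lambda>i. if i = 0 then 0 else 1 / real i)"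

lemma neg_binomial_fps_0_mult_nth: "(neg_binomial_fps 0 * f) $ m = (\<Sum>i\<le>m. f $ i)"
  by (simp add: fps_mult_nth neg_binomial_fps_def atLeast0AtMost mult.commute[of _ f])

lemma neg_binomial_fps_Suc: "neg_binomial_fps (Suc a) = neg_binomial_fps 0 * neg_binomial_fps a"
proof (rule fps_ext)
  fix m
  have "real (Suc a + m choose m) = (\<Sum>i\<le>m. real ((a + i) choose i))"
    using sum_choose_lower[of a m] by (metis of_nat_sum add_Suc)
  then show "neg_binomial_fps (Suc a) $ m = (neg_binomial_fps 0 * neg_binomial_fps a) $ m"
    by (simp add: neg_binomial_fps_0_mult_nth) (simp add: neg_binomial_fps_def)
qed

lemma neg_binomial_fps_add: "neg_binomial_fps (a + b + 1) = neg_binomial_fps a * neg_binomial_fps b"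
  by (induction b) (simp_all add: neg_binomial_fps_Suc mult_ac)

lemma sum_atMost_eq_Suc_index:
  fixes g :: "nat \<Rightarrow> nat \<Rightarrow> real"
  assumes "\<And>a. g (Suc a) 0 = g a 0"
    and "\<And>a m. g (Suc a) m + g a (Suc m) = g (Suc a) (Suc m)"
  shows "(\<Sum>t\<le>m. g a t) = g (Suc a) m"
  by (induction m) (simp_all add: assms)

lemma neg_binomial_fps_mult_eq_Abs_fps:
  fixes g :: "nat \<Rightarrow> nat \<Rightarrow> real"
  assumes "neg_binomial_fps 0 * F = Abs_fps (g 0)"
    and "\<And>a. g (Suc a) 0 = g a 0"
    and "\<And>a m. g (Suc a) m + g a (Suc m) = g (Suc a) (Suc m)"
  shows "neg_binomial_fps a * F = Abs_fps (g a)"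
proof (induction a)
  case (Suc a)
  have "neg_binomial_fps (Suc a) * F = neg_binomial_fps 0 * Abs_fps (g a)"
    by (simp add: neg_binomial_fps_Suc mult.assoc Suc)
  also have "\<dots> = Abs_fps (g (Suc a))"
    by (rule fps_ext) (simp add: neg_binomial_fps_0_mult_nth sum_atMost_eq_Suc_index assms(2,3))
  finally show ?case .
qed (fact assms(1))

lemma neg_binomial_fps_0_mult_log_fps: "neg_binomial_fps 0 * log_fps = Abs_fps H1"
proof (rule fps_ext)
  fix m show "(neg_binomial_fps 0 * log_fps) $ m = Abs_fps H1 $ m"
    by (induction m) (simp_all add: neg_binomial_fps_0_mult_nth log_fps_def H1_Suc)
qed

lemma neg_binomial_fps_mult_log_fps:
  "neg_binomial_fps a * log_fps = Abs_fps (\<lambda>m. real ((a + m) choose m) * (H1 (a + m) - H1 a))"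
  by (rule neg_binomial_fps_mult_eq_Abs_fps)
    (simp_all add: neg_binomial_fps_0_mult_log_fps harmonic_step del: add_Suc add_Suc_right)

lemma fps_deriv_log_fps: "fps_deriv log_fps = neg_binomial_fps 0"
  by (rule fps_ext) (simp add: log_fps_def neg_binomial_fps_def del: of_nat_Suc)

lemma log_fps_sq_nth_Suc: "(log_fps^2) $ Suc m = 2 * H1 m / real (Suc m)"
proof -
  have "fps_deriv (log_fps^2) = fps_const 2 * (neg_binomial_fps 0 * log_fps)"
    by (simp add: fps_deriv_power fps_deriv_log_fps mult_ac)
  then have "fps_deriv (log_fps^2) $ m = 2 * H1 m"
    by (simp add: neg_binomial_fps_0_mult_log_fps)
  then have "real (Suc m) * (log_fps^2) $ Suc m = 2 * H1 m"
    by (simp del: of_nat_Suc)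
  then show ?thesis by (simp add: field_simps del: of_nat_Suc)
qed

lemma neg_binomial_fps_0_mult_log_fps_sq:
  "neg_binomial_fps 0 * log_fps^2 = Abs_fps (\<lambda>m. (H1 m)^2 - H2 m)"
proof (rule fps_ext)
  fix m show "(neg_binomial_fps 0 * log_fps^2) $ m = Abs_fps (\<lambda>m. (H1 m)^2 - H2 m) $ m"
  proof (induction m)
    case 0 then show ?case
      by (simp add: neg_binomial_fps_0_mult_nth power2_eq_square fps_mult_nth log_fps_def)
  next
    case (Suc m)
    have "(H1 m)^2 - H2 m + 2 * H1 m / real (Suc m) = (H1 (Suc m))^2 - H2 (Suc m)"
      by (simp add: H1_Suc H2_Suc field_simps power2_eq_square del: of_nat_Suc)
    with Suc show ?case by (simp add: neg_binomial_fps_0_mult_nth log_fps_sq_nth_Suc)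
  qed
qed

lemma neg_binomial_fps_mult_log_fps_sq:
  "neg_binomial_fps a * log_fps^2
     = Abs_fps (\<lambda>m. real ((a + m) choose m) * ((H1 (a + m) - H1 a)^2 - (H2 (a + m) - H2 a)))"
  by (rule neg_binomial_fps_mult_eq_Abs_fps)
    (simp_all add: neg_binomial_fps_0_mult_log_fps_sq harmonic_sq_step del: add_Suc add_Suc_right)

lemma harmonic_weighted_fps:
  "Abs_fps (\<lambda>i. real ((a + i) choose i) * H1 (a + i))
     = neg_binomial_fps a * (fps_const (H1 a) + log_fps)"
proof (rule fps_ext)
  fix i
  have "(neg_binomial_fps a * (fps_const (H1 a) + log_fps)) $ i
      = real ((a + i) choose i) * H1 a + real ((a + i) choose i) * (H1 (a + i) - H1 a)"
    unfolding distrib_left fps_add_nth fps_mult_right_const_nth neg_binomial_fps_mult_log_fps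
    by (simp add: neg_binomial_fps_def)
  then show "Abs_fps (\<lambda>i. real ((a + i) choose i) * H1 (a + i)) $ i
      = (neg_binomial_fps a * (fps_const (H1 a) + log_fps)) $ i"
    by (simp add: algebra_simps)
qed

lemma log_fps_shifted_product:
  "(fps_const x + log_fps) * (fps_const y + log_fps)
     = fps_const (x * y) + fps_const (x + y) * log_fps + log_fps^2"
proof -
  have "(fps_const x + log_fps) * (fps_const y + log_fps)
      = fps_const x * fps_const y + fps_const x * log_fps + fps_const y * log_fps + log_fps * log_fps"
    by (simp add: algebra_simps del: fps_const_mult)
  then show ?thesis
    by (simp add: power2_eq_square distrib_right flip: fps_const_add)
qed

lemma convolution_choose_harmonic:
  "(\<Sum>i=0..m. real ((P + i) choose P) * real ((Q + (m - i)) choose Q) * H1 (P + i) * H1 (Q + (m - i)))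
   = real ((m + P + Q + 1) choose m) * (H2 (P + Q + 1) - H2 (m + P + Q + 1)
      + (H1 (m + P + Q + 1) - H1 (P + Q + 1) + H1 P) * (H1 (m + P + Q + 1) - H1 (P + Q + 1) + H1 Q))"
proof -
  define s where "s = P + Q + 1"
  have choose_swap: "(R + i) choose R = (R + i) choose i" for R i :: nat
    using binomial_symmetric[of i "R + i"] by simp
  have "(\<Sum>i=0..m. real ((P + i) choose P) * real ((Q + (m - i)) choose Q) * H1 (P + i) * H1 (Q + (m - i)))
      = (Abs_fps (\<lambda>i. real ((P + i) choose i) * H1 (P + i))
          * Abs_fps (\<lambda>i. real ((Q + i) choose i) * H1 (Q + i))) $ m"
    unfolding fps_mult_nth atLeast0AtMost[symmetric] fps_nth_Abs_fps
  proof (rule sum.cong)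
    fix i assume "i \<in> {0..m}"
    show "real ((P + i) choose P) * real ((Q + (m - i)) choose Q) * H1 (P + i) * H1 (Q + (m - i))
        = real ((P + i) choose i) * H1 (P + i) * (real ((Q + (m - i)) choose (m - i)) * H1 (Q + (m - i)))"
      unfolding choose_swap[of P i] choose_swap[of Q "m - i"] by (simp only: mult_ac)
  qed simp
  also have "\<dots> = (neg_binomial_fps s * (fps_const (H1 P * H1 Q) + fps_const (H1 P + H1 Q) * log_fps
                    + log_fps^2)) $ m"
    unfolding harmonic_weighted_fps s_def neg_binomial_fps_add log_fps_shifted_product[symmetric]
    by (simp only: mult_ac)
  also have "\<dots> = (neg_binomial_fps s * fps_const (H1 P * H1 Q)) $ m
      + (fps_const (H1 P + H1 Q) * (neg_binomial_fps s * log_fps)) $ m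
      + (neg_binomial_fps s * log_fps^2) $ m"
    by (simp add: distrib_left mult_ac)
  also have "\<dots> = real ((s + m) choose m) * (H1 P * H1 Q)
       + (H1 P + H1 Q) * (real ((s + m) choose m) * (H1 (s + m) - H1 s))
       + real ((s + m) choose m) * ((H1 (s + m) - H1 s)^2 - (H2 (s + m) - H2 s))"
    unfolding fps_mult_left_const_nth fps_mult_right_const_nth neg_binomial_fps_mult_log_fps
      neg_binomial_fps_mult_log_fps_sq
    by (simp add: neg_binomial_fps_def)
  also have "\<dots> = real ((s + m) choose m) * (H2 s - H2 (s + m)
      + (H1 (s + m) - H1 s + H1 P) * (H1 (s + m) - H1 s + H1 Q))"
    by (simp add: algebra_simps power2_eq_square)
  finally show ?thesis
    unfolding s_def by (simp add: add_ac)
qed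

lemma choose_mult_choose_revision:
  "((p + c + i) choose p) * ((c + i) choose c) = ((p + c) choose c) * ((p + c + i) choose (p + c))"
proof -
  have "((p + c + i) choose p) * ((c + i) choose c) = ((p + c + i) choose (c + i)) * ((c + i) choose c)"
    using binomial_symmetric[of p "p + c + i"] by (simp add: add.assoc)
  also have "\<dots> = ((p + c + i) choose c) * ((p + i) choose i)"
    using choose_mult[of c "c + i" "p + c + i"] by simp
  also have "\<dots> = ((p + c + i) choose (p + c)) * ((p + c) choose c)"
    using choose_mult[of c "p + c" "p + c + i"] binomial_symmetric[of i "p + i"] by simp
  finally show ?thesis by (simp only: mult.commute)
qed

lemma sum_choose_choose_harmonic:
  fixes n p q c d m :: nat
  assumes n: "n = c + d + m"
  shows "(\<Sum>k=0..n. real ((p + k) choose p) * real ((q + n - k) choose q)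
            * real (k choose c) * real ((n - k) choose d) * H1 (p + k) * H1 (q + n - k))
       = real ((n + p + q + 1) choose m) * real ((p + c) choose c) * real ((q + d) choose d)
         * (H2 (p + q + c + d + 1) - H2 (n + p + q + 1)
            + (H1 (n + p + q + 1) - H1 (p + q + c + d + 1) + H1 (p + c))
              * (H1 (n + p + q + 1) - H1 (p + q + c + d + 1) + H1 (q + d)))"
proof -
  define f where "f k = real ((p + k) choose p) * real ((q + n - k) choose q)
      * real (k choose c) * real ((n - k) choose d) * H1 (p + k) * H1 (q + n - k)" for k
  define g where "g i = real ((p + c + i) choose (p + c)) * real ((q + d + (m - i)) choose (q + d))
      * H1 (p + c + i) * H1 (q + d + (m - i))" for i
  have "(\<Sum>k=0..n. f k) = (\<Sum>k=c..c+m. f k)"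
    by (rule sum.mono_neutral_right) (auto simp: f_def n)
  also have "\<dots> = (\<Sum>i=0..m. f (c + i))"
    using sum.shift_bounds_cl_nat_ivl[of f 0 c m] by (simp add: add.commute)
  also have "\<dots> = (\<Sum>i=0..m. real ((p + c) choose c) * real ((q + d) choose d) * g i)"
  proof (rule sum.cong)
    fix i assume "i \<in> {0..m}"
    then have "p + (c + i) = p + c + i" "q + n - (c + i) = q + d + (m - i)" "n - (c + i) = d + (m - i)"
      by (auto simp: n)
    with choose_mult_choose_revision[of p c i] choose_mult_choose_revision[of q d "m - i"]
    show "f (c + i) = real ((p + c) choose c) * real ((q + d) choose d) * g i"
      unfolding f_def g_def by (simp add: algebra_simps flip: of_nat_mult)
  qed simp
  also have "\<dots> = real ((p + c) choose c) * real ((q + d) choose d) * (\<Sum>i=0..m. g i)"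
    by (simp add: sum_distrib_left)
  also have "(\<Sum>i=0..m. g i) = real ((n + p + q + 1) choose m)
         * (H2 (p + q + c + d + 1) - H2 (n + p + q + 1)
            + (H1 (n + p + q + 1) - H1 (p + q + c + d + 1) + H1 (p + c))
              * (H1 (n + p + q + 1) - H1 (p + q + c + d + 1) + H1 (q + d)))"
    using convolution_choose_harmonic[of "p + c" "q + d" m] unfolding g_def n by (simp add: add_ac)
  finally show ?thesis unfolding f_def by (simp only: mult_ac)
qed

theorem mainTheorem5:
  fixes n p q c d :: nat
  shows "(\<Sum>k=0..n. real ((p+k) choose p) * real ((q+n-k) choose q)
            * real (k choose c) * real ((n-k) choose d) * H1 (p+k) * H1 (q+n-k))
       = binomz (n+p+q+1) (int n - int c - int d) * real ((p+c) choose c) * real ((q+d) choose d)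
         * (H2 (p+q+c+d+1) - H2 (n+p+q+1)
            + (H1 (n+p+q+1) - H1 (p+q+c+d+1) + H1 (p+c))
              * (H1 (n+p+q+1) - H1 (p+q+c+d+1) + H1 (q+d)))"
proof (cases "c + d \<le> n")
  case True
  then obtain m where n: "n = c + d + m"
    using le_iff_add by blast
  then have "binomz (n+p+q+1) (int n - int c - int d) = real ((n+p+q+1) choose m)"
    by (simp add: binomz_def)
  with sum_choose_choose_harmonic[OF n] show ?thesis by simp
next
  case False
  then have "binomz (n+p+q+1) (int n - int c - int d) = 0"
    by (simp add: binomz_def)
  moreover have "k choose c = 0 \<or> (n - k) choose d = 0" if "k \<le> n" for k
    using False that by (cases "k < c") auto
  ultimately show ?thesis
    by (auto intro!: sum.neutral)
qed

end
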